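(* Let $C$ be a $k$-context of the call-by-value $\lambda$-calculus and $V_1,\dots,V_k$ values. Then $$\mathcal{T}(C[V_1,\dots,V_k])=\big\{\tilde c[\vec v^{\,1},\dots,\vec v^{\,k}]\ \big|\ c\in\mathcal{T}(C),\ \tilde c\text{ a rigid of }c,\ \vec v^{\,i}=\langle v^i_1,\dots,v^i_{\deg_{\Box_i}(c)}\rangle \text{ with } [v^i_1,\dots,v^i_{\deg_{\Box_i}(c)}]\in\mathcal{T}(V_i)\text{ for all } i\big\}.$$
   Context: CbV $\lambda$-terms are ordinary $\lambda$-terms $M::=x\mid \lambda x.M\mid MM$; values are variables and abstractions. A $k$-context $C$ is a $\lambda$-term possibly containing holes $\Box_1,\dots,\Box_k$ (each any number of times); $C[M_1,\dots,M_k]$ denotes filling $\Box_i$ with $M_i$ (variable capture allowed). Resource CbV terms: resource values $v::=x\mid \lambda x.s$ and resource simple terms $s::= s_1s_2\mid [v_1,\dots,v_n]$ ($n\ge 0$, brackets denote finite multisets, "bags"), up to $\alpha$-equivalence. Resource $k$-contexts: $c^v::=\Box_1\mid\dots\mid\Box_k\mid x\mid \lambda x.c^s$, $c^s::=c^s_1c^s_2\mid[c^v_1,\dots,c^v_n]$. $\deg_{\Box_i}(c)$ is the number of occurrences of $\Box_i$ in $c$. Taylor expansion: $\mathcal{T}(x)=\{[x,\dots,x]\ (n \text{ copies})\mid n\in\mathbb N\}$, $\mathcal{T}(\Box_i)=\{[\Box_i,\dots,\Box_i]\ (n\text{ copies})\mid n\in\mathbb N\}$, $\mathcal{T}(\lambda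 x.M)=\{[\lambda x.s_1,\dots,\lambda x.s_n]\mid n\in\mathbb N,\ s_j\in\mathcal{T}(M)\}$, $\mathcal{T}(M_1M_2)=\{s_1s_2\mid s_j\in\mathcal{T}(M_j)\}$. Rigids of a resource context $c$ (ordered-list versions): $\mathrm{Rigid}(\Box_i)=\{\Box_i\}$, $\mathrm{Rigid}(x)=\{x\}$, $\mathrm{Rigid}(\lambda x.c_0)=\{\lambda x.\tilde c_0\mid\tilde c_0\in\mathrm{Rigid}(c_0)\}$, $\mathrm{Rigid}(c_0c_1)=\{\tilde c_0\tilde c_1\mid \tilde c_j\in\mathrm{Rigid}(c_j)\}$, $\mathrm{Rigid}([c_1,\dots,c_n])=\{\langle\tilde c_{\sigma(1)},\dots,\tilde c_{\sigma(n)}\rangle\mid\sigma\text{ a permutation},\ \tilde c_j\in\mathrm{Rigid}(c_j)\}$. Filling a rigid $\tilde c$ of $c$ with lists $\vec v^{\,i}$ of resource values of length $\deg_{\Box_i}(c)$: for $\tilde c=\Box_i$, the result is the unique value in $\vec v^{\,i}$; for $x$ it is $x$; $(\lambda x.\tilde c_0)[\vec v^{\,1},\dots,\vec v^{\,k}]=\lambda x.\tilde c_0[\vec v^{\,1},\dots,\vec v^{\,k}]$; for $\tilde c_1\tilde c_2$, split each $\vec v^{\,i}=\vec w^{\,i1}\vec w^{\,i2}$ with $\vec w^{\,ij}$ of length $\deg_{\Box_i}(c_j)$, result $\tilde c_1[\vec w^{\,11},\dots,\vec w^{\,k1}]\,\tilde c_2[\vec w^{\,12},\dots,\vec w^{\,k2}]$;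 for $\langle\tilde c_{\sigma(1)},\dots,\tilde c_{\sigma(n)}\rangle$, split $\vec v^{\,i}=\vec w^{\,i1}\cdots\vec w^{\,in}$ with $\vec w^{\,ij}$ of length $\deg_{\Box_i}(c_{\sigma(j)})$, result the bag $[\tilde c_{\sigma(1)}[\vec w^{\,11},\dots,\vec w^{\,k1}],\dots,\tilde c_{\sigma(n)}[\vec w^{\,1n},\dots,\vec w^{\,kn}]]$. *)

theory Defs
  imports Main "HOL-Library.Multiset"
begin

type_synonym var = nat

datatype lterm = Var var | Lam var lterm | App lterm lterm | Hole nat

fun holes :: "lterm \<Rightarrow> nat set" where
  "holes (Var x) = {}"
| "holes (Lam x M) = holes M"
| "holes (App M N) = holes M \<union> holes N"
| "holes (Hole i) = {i}"

fun is_value :: "lterm \<Rightarrow> bool" where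
  "is_value (Var x) = True"
| "is_value (Lam x M) = True"
| "is_value _ = False"

text \<open>Context filling C[M_1,...,M_k]: hole i replaced by M i, variable capture allowed.\<close>
fun fill_ctx :: "lterm \<Rightarrow> (nat \<Rightarrow> lterm) \<Rightarrow> lterm" where
  "fill_ctx (Var x) Ms = Var x"
| "fill_ctx (Lam x M) Ms = Lam x (fill_ctx M Ms)"
| "fill_ctx (App M N) Ms = App (fill_ctx M Ms) (fill_ctx N Ms)"
| "fill_ctx (Hole i) Ms = Ms i"

datatype rval = RVar var | RLam var rsimp | RHole nat
     and rsimp = RApp rsimp rsimp | RBag "rval multiset"

primrec degV :: "nat \<Rightarrow> rval \<Rightarrow> nat" and degS :: "nat \<Rightarrow> rsimp \<Rightarrow> nat" where
  "degV i (RVar x) = 0"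
| "degV i (RLam x s) = degS i s"
| "degV i (RHole j) = (if i = j then 1 else 0)"
| "degS i (RApp s t) = degS i s + degS i t"
| "degS i (RBag M) = sum_mset (image_mset (degV i) M)"

fun taylor :: "lterm \<Rightarrow> rsimp set" where
  "taylor (Var x) = {RBag (replicate_mset n (RVar x)) | n. True}"
| "taylor (Hole i) = {RBag (replicate_mset n (RHole i)) | n. True}"
| "taylor (Lam x M) = {RBag (mset (map (RLam x) ss)) | ss. set ss \<subseteq> taylor M}"
| "taylor (App M N) = {RApp s t | s t. s \<in> taylor M \<and> t \<in> taylor N}"

section \<open>Rigids (bags replaced by ordered lists)\<close>

datatype rigv = GVar var | GLam var rigs | GHole nat
     and rigs = GApp rigs rigs | GList "rigv list"

inductive rigidV :: "rval \<Rightarrow> rigv \<Rightarrow> bool" and rigidS :: "rsimp \<Rightarrow> rigs \<Rightarrow> bool" where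
  "rigidV (RVar x) (GVar x)"
| "rigidV (RHole i) (GHole i)"
| "rigidS s g \<Longrightarrow> rigidV (RLam x s) (GLam x g)"
| "rigidS s1 g1 \<Longrightarrow> rigidS s2 g2 \<Longrightarrow> rigidS (RApp s1 s2) (GApp g1 g2)"
| "mset cs = M \<Longrightarrow> list_all2 rigidV cs gs \<Longrightarrow> rigidS (RBag M) (GList gs)"

fun gdegV :: "nat \<Rightarrow> rigv \<Rightarrow> nat" and gdegS :: "nat \<Rightarrow> rigs \<Rightarrow> nat"
  and gdegL :: "nat \<Rightarrow> rigv list \<Rightarrow> nat" where
  "gdegV i (GVar x) = 0"
| "gdegV i (GLam x g) = gdegS i g"
| "gdegV i (GHole j) = (if i = j then 1 else 0)"
| "gdegS i (GApp g h) = gdegS i g + gdegS i h"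
| "gdegS i (GList gs) = gdegL i gs"
| "gdegL i [] = 0"
| "gdegL i (g # gs) = gdegV i g + gdegL i gs"

text \<open>Filling a rigid with lists of resource values: list vs i is split consecutively
  among the sub-rigids according to their degrees in hole i.\<close>
fun fillV :: "rigv \<Rightarrow> (nat \<Rightarrow> rval list) \<Rightarrow> rval"
  and fillS :: "rigs \<Rightarrow> (nat \<Rightarrow> rval list) \<Rightarrow> rsimp"
  and fillL :: "rigv list \<Rightarrow> (nat \<Rightarrow> rval list) \<Rightarrow> rval list" where
  "fillV (GVar x) vs = RVar x"
| "fillV (GLam x g) vs = RLam x (fillS g vs)"
| "fillV (GHole i) vs = hd (vs i)"
| "fillS (GApp g h) vs =
     RApp (fillS g (\<lambda>i. take (gdegS i g) (vs i))) (fillS h (\<lambda>i. drop (gdegS i g) (vs i)))"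
| "fillS (GList gs) vs = RBag (mset (fillL gs vs))"
| "fillL [] vs = []"
| "fillL (g # gs) vs =
     fillV g (\<lambda>i. take (gdegV i g) (vs i)) # fillL gs (\<lambda>i. drop (gdegV i g) (vs i))"

end

theory Submission
  imports Defs
begin

text \<open>For a set \<open>E\<close> of resource contexts and sets \<open>T i\<close> of resource values, consider all
  fillings of rigids of elements of \<open>E\<close> with values drawn from the \<open>T i\<close>. This operation
  commutes with application and abstraction, turns bags over \<open>E\<close> into bags over the fillings of
  single elements (rigid lists split and concatenate along the filling lists), and sends the
  hole \<open>\<box>\<^sub>j\<close> to \<open>T j\<close>. The Taylor expansion of a value is the set of bags over its one-element
  expansions, so induction on \<open>C\<close> shows that \<open>\<T>(C[V\<^sub>1,\<dots>,V\<^sub>k])\<close> is the set of fillings of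
  \<open>\<T>(C)\<close> with the one-element expansions of the \<open>V\<^sub>i\<close>. Constraining only the holes \<open>1..k\<close>
  changes nothing, since elements of \<open>\<T>(C)\<close> have degree 0 in holes not occurring in \<open>C\<close>.\<close>

definition bags :: "rval set \<Rightarrow> rsimp set" where
  "bags A = {RBag (mset us) | us. set us \<subseteq> A}"

text \<open>The constraints on the filling lists are imposed at every hole index;
  \<open>fillingsS_taylor_holes\<close> shows that only the holes of the context matter.\<close>

definition fillingsV :: "rval set \<Rightarrow> (nat \<Rightarrow> rval set) \<Rightarrow> rval set" where
  "fillingsV E T = {fillV g vs | c g vs. c \<in> E \<and> rigidV c g \<and>
     (\<forall>i. length (vs i) = degV i c \<and> set (vs i) \<subseteq> T i)}"

definition fillingsS :: "rsimp set \<Rightarrow> (nat \<Rightarrow> rval set) \<Rightarrow> rsimp set" where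
  "fillingsS E T = {fillS g vs | c g vs. c \<in> E \<and> rigidS c g \<and>
     (\<forall>i. length (vs i) = degS i c \<and> set (vs i) \<subseteq> T i)}"

inductive_simps rigidV_RVar [simp]: "rigidV (RVar x) g"
inductive_simps rigidV_RHole [simp]: "rigidV (RHole i) g"
inductive_simps rigidV_RLam [simp]: "rigidV (RLam x s) g"
inductive_simps rigidS_RApp [simp]: "rigidS (RApp s t) g"
inductive_simps rigidS_RBag [simp]: "rigidS (RBag M) g"

lemma sum_mset_image_mset_mset: "sum_mset (image_mset f (mset xs)) = sum_list (map f xs)"
  by (simp flip: sum_mset_sum_list mset_map)

lemma gdegV_rigidV: "rigidV c g \<Longrightarrow> gdegV i g = degV i c"
  and gdegS_rigidS: "rigidS s h \<Longrightarrow> gdegS i h = degS i s"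
proof (induction rule: rigidV_rigidS.inducts)
  case (5 cs M gs)
  from 5(2) have "gdegL i gs = sum_list (map (degV i) cs)"
    by (induction rule: list_all2_induct) auto
  with 5(1) show ?case by (auto simp: sum_mset_image_mset_mset)
qed auto

lemma fillS_GApp_append:
  assumes "\<forall>i. length (w i) = gdegS i g"
  shows "fillS (GApp g h) (\<lambda>i. w i @ vs i) = RApp (fillS g w) (fillS h vs)"
  by (simp flip: assms[rule_format])

lemma fillL_Cons_append:
  assumes "\<forall>i. length (w i) = gdegV i g"
  shows "fillL (g # gs) (\<lambda>i. w i @ vs i) = fillV g w # fillL gs vs"
  by (simp flip: assms[rule_format])

lemma fillV_cong: "(\<forall>i. gdegV i g \<noteq> 0 \<longrightarrow> vs i = vs' i) \<Longrightarrow> fillV g vs = fillV g vs'"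
  and fillS_cong: "(\<forall>i. gdegS i h \<noteq> 0 \<longrightarrow> vs i = vs' i) \<Longrightarrow> fillS h vs = fillS h vs'"
  and fillL_cong: "(\<forall>i. gdegL i gs \<noteq> 0 \<longrightarrow> vs i = vs' i) \<Longrightarrow> fillL gs vs = fillL gs vs'"
proof (induction g vs and h vs and gs vs arbitrary: vs' and vs' and vs' rule: fillV_fillS_fillL.induct)
  case (5 gs vs)
  then show ?case by (metis fillS.simps(2) gdegS.simps(2))
qed auto

lemma fillingsV_memI:
  "c \<in> E \<Longrightarrow> rigidV c g \<Longrightarrow> \<forall>i. length (vs i) = degV i c \<and> set (vs i) \<subseteq> T i \<Longrightarrow>
   fillV g vs \<in> fillingsV E T"
  unfolding fillingsV_def by blast

lemma fillingsV_memE: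
  assumes "v \<in> fillingsV E T"
  obtains c g vs where "v = fillV g vs" "c \<in> E" "rigidV c g"
    "\<forall>i. length (vs i) = degV i c \<and> set (vs i) \<subseteq> T i"
  using assms unfolding fillingsV_def by blast

lemma fillingsS_memI:
  "c \<in> E \<Longrightarrow> rigidS c g \<Longrightarrow> \<forall>i. length (vs i) = degS i c \<and> set (vs i) \<subseteq> T i \<Longrightarrow>
   fillS g vs \<in> fillingsS E T"
  unfolding fillingsS_def by blast

lemma fillingsS_memE:
  assumes "u \<in> fillingsS E T"
  obtains c g vs where "u = fillS g vs" "c \<in> E" "rigidS c g"
    "\<forall>i. length (vs i) = degS i c \<and> set (vs i) \<subseteq> T i"
  using assms unfolding fillingsS_def by blast

lemma fillingsV_RVar: "fillingsV {RVar x} T = {RVar x}"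
proof -
  have "fillV (GVar x) (\<lambda>_. []) \<in> fillingsV {RVar x} T"
    by (intro fillingsV_memI) auto
  then show ?thesis
    by (auto elim: fillingsV_memE)
qed

lemma fillingsV_RHole: "fillingsV {RHole j} T = T j"
proof (intro set_eqI iffI)
  fix v assume "v \<in> fillingsV {RHole j} T"
  then obtain vs where "v = hd (vs j)" "length (vs j) = 1" "set (vs j) \<subseteq> T j"
    by (elim fillingsV_memE) (fastforce split: if_splits)
  then show "v \<in> T j" by (cases "vs j") auto
next
  fix v assume "v \<in> T j"
  then have "fillV (GHole j) ((\<lambda>_. [])(j := [v])) \<in> fillingsV {RHole j} T"
    by (intro fillingsV_memI) auto
  then show "v \<in> fillingsV {RHole j} T" by simp
qed

lemma fillingsV_RLam: "fillingsV (RLam x ` E) T = RLam x ` fillingsS E T"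
proof (intro set_eqI iffI)
  fix v assume "v \<in> fillingsV (RLam x ` E) T"
  then obtain s h vs where "v = RLam x (fillS h vs)" "s \<in> E" "rigidS s h"
    "\<forall>i. length (vs i) = degS i s \<and> set (vs i) \<subseteq> T i"
    by (elim fillingsV_memE) auto
  then show "v \<in> RLam x ` fillingsS E T" by (auto intro: fillingsS_memI)
next
  fix v assume "v \<in> RLam x ` fillingsS E T"
  then obtain s h vs where "v = fillV (GLam x h) vs" "s \<in> E" "rigidS s h"
    "\<forall>i. length (vs i) = degS i s \<and> set (vs i) \<subseteq> T i"
    by (auto elim: fillingsS_memE)
  then show "v \<in> fillingsV (RLam x ` E) T"
    by (metis degV.simps(2) fillingsV_memI image_eqI rigidV_RLam)
qed

lemma fillingsS_RApp:
  "fillingsS {RApp s t | s t. s \<in> E \<and> t \<in> F} T =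
   {RApp s t | s t. s \<in> fillingsS E T \<and> t \<in> fillingsS F T}"
proof (intro set_eqI iffI)
  fix u assume "u \<in> fillingsS {RApp s t | s t. s \<in> E \<and> t \<in> F} T"
  then obtain s t g h vs where "u = fillS (GApp g h) vs" "s \<in> E" "t \<in> F" "rigidS s g" "rigidS t h"
    and vs: "\<forall>i. length (vs i) = degS i s + degS i t \<and> set (vs i) \<subseteq> T i"
    by (elim fillingsS_memE) auto
  moreover have "fillS g (\<lambda>i. take (gdegS i g) (vs i)) \<in> fillingsS E T"
    using calculation
    by (intro fillingsS_memI) (auto simp: gdegS_rigidS dest: in_set_takeD)
  moreover have "fillS h (\<lambda>i. drop (gdegS i g) (vs i)) \<in> fillingsS F T"
    using calculation
    by (intro fillingsS_memI) (auto simp: gdegS_rigidS dest: in_set_dropD)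
  ultimately show "u \<in> {RApp s t | s t. s \<in> fillingsS E T \<and> t \<in> fillingsS F T}"
    by auto
next
  fix u assume "u \<in> {RApp s t | s t. s \<in> fillingsS E T \<and> t \<in> fillingsS F T}"
  then obtain s t g h w vs where "u = RApp (fillS g w) (fillS h vs)"
    "s \<in> E" "t \<in> F" "rigidS s g" "rigidS t h"
    "\<forall>i. length (w i) = degS i s \<and> set (w i) \<subseteq> T i"
    "\<forall>i. length (vs i) = degS i t \<and> set (vs i) \<subseteq> T i"
    by (auto elim!: fillingsS_memE)
  moreover from calculation have "fillS (GApp g h) (\<lambda>i. w i @ vs i) = u"
    by (metis fillS_GApp_append gdegS_rigidS)
  moreover from calculation
  have "fillS (GApp g h) (\<lambda>i. w i @ vs i) \<in> fillingsS {RApp s t | s t. s \<in> E \<and> t \<in> F} T"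
    by (intro fillingsS_memI) auto
  ultimately show "u \<in> fillingsS {RApp s t | s t. s \<in> E \<and> t \<in> F} T"
    by simp
qed

lemma RBag_mset_in_bags: "RBag (mset us) \<in> bags A \<longleftrightarrow> set us \<subseteq> A"
  unfolding bags_def by (auto dest: mset_eq_setD)

lemma set_fillL_subset_fillingsV:
  "list_all2 rigidV cs gs \<Longrightarrow> set cs \<subseteq> E \<Longrightarrow>
   \<forall>i. length (vs i) = sum_list (map (degV i) cs) \<and> set (vs i) \<subseteq> T i \<Longrightarrow>
   set (fillL gs vs) \<subseteq> fillingsV E T"
proof (induction arbitrary: vs rule: list_all2_induct)
  case (Cons c cs g gs)
  note deg = gdegV_rigidV[OF \<open>rigidV c g\<close>]
  have "fillV g (\<lambda>i. take (gdegV i g) (vs i)) \<in> fillingsV E T"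
    unfolding fillingsV_def using Cons.hyps Cons.prems
    by (fastforce simp: deg dest: in_set_takeD)
  moreover have "set (fillL gs (\<lambda>i. drop (gdegV i g) (vs i))) \<subseteq> fillingsV E T"
    using Cons.prems by (intro Cons.IH) (auto simp: deg dest: in_set_dropD)
  ultimately show ?case by simp
qed simp

lemma fillingsV_list_as_fillL:
  "set us \<subseteq> fillingsV E T \<Longrightarrow>
   \<exists>cs gs vs. set cs \<subseteq> E \<and> list_all2 rigidV cs gs \<and>
     (\<forall>i. length (vs i) = sum_list (map (degV i) cs) \<and> set (vs i) \<subseteq> T i) \<and> fillL gs vs = us"
proof (induction us)
  case Nil
  show ?case by (intro exI[of _ "[]"] exI[of _ "\<lambda>_. []"]) simp
next
  case (Cons u us)
  from Cons.prems have "u \<in> fillingsV E T" by simp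
  then obtain c g w where c: "c \<in> E" "rigidV c g" "u = fillV g w"
    and w: "\<forall>i. length (w i) = degV i c \<and> set (w i) \<subseteq> T i"
    by (rule fillingsV_memE)
  from Cons.prems have "set us \<subseteq> fillingsV E T" by simp
  then obtain cs gs vs where cs: "set cs \<subseteq> E" "list_all2 rigidV cs gs" "fillL gs vs = us"
    and vs: "\<forall>i. length (vs i) = sum_list (map (degV i) cs) \<and> set (vs i) \<subseteq> T i"
    using Cons.IH by meson
  have fill: "fillL (g # gs) (\<lambda>i. w i @ vs i) = u # us"
    unfolding c(3) cs(3)[symmetric]
    by (rule fillL_Cons_append) (use w gdegV_rigidV[OF c(2)] in simp)
  have lengths: "\<forall>i. length (w i @ vs i) = sum_list (map (degV i) (c # cs)) \<and>
      set (w i @ vs i) \<subseteq> T i"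
    using w vs by simp
  have "set (c # cs) \<subseteq> E" "list_all2 rigidV (c # cs) (g # gs)"
    using c cs by auto
  with lengths fill show ?case
    by (intro exI[of _ "c # cs"] exI[of _ "g # gs"] exI[of _ "\<lambda>i. w i @ vs i"] conjI)
qed

lemma fillingsS_bags: "fillingsS (bags E) T = bags (fillingsV E T)"
proof (intro set_eqI iffI)
  fix u assume "u \<in> fillingsS (bags E) T"
  then obtain c g vs where "u = fillS g vs" "c \<in> bags E" "rigidS c g"
    and c: "\<forall>i. length (vs i) = degS i c \<and> set (vs i) \<subseteq> T i"
    by (rule fillingsS_memE)
  then obtain cs0 cs gs where "set cs0 \<subseteq> E" and cs: "mset cs = mset cs0" "list_all2 rigidV cs gs"
    and u: "u = RBag (mset (fillL gs vs))" and "c = RBag (mset cs0)"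
    unfolding bags_def by auto
  with c have vs: "\<forall>i. length (vs i) = sum_list (map (degV i) cs0) \<and> set (vs i) \<subseteq> T i"
    by (simp add: sum_mset_image_mset_mset)
  have "set cs \<subseteq> E"
    using \<open>set cs0 \<subseteq> E\<close> cs(1) by (metis mset_eq_setD)
  moreover have "sum_list (map (degV i) cs0) = sum_list (map (degV i) cs)" for i
    by (simp flip: sum_mset_image_mset_mset add: cs(1))
  ultimately have "set (fillL gs vs) \<subseteq> fillingsV E T"
    using set_fillL_subset_fillingsV[OF cs(2)] vs by simp
  then show "u \<in> bags (fillingsV E T)"
    by (simp add: u RBag_mset_in_bags)
next
  fix u assume "u \<in> bags (fillingsV E T)"
  then obtain us where "u = RBag (mset us)" "set us \<subseteq> fillingsV E T"
    unfolding bags_def by auto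
  then obtain cs gs vs where cs: "set cs \<subseteq> E" "list_all2 rigidV cs gs" "u = fillS (GList gs) vs"
    and vs: "\<forall>i. length (vs i) = sum_list (map (degV i) cs) \<and> set (vs i) \<subseteq> T i"
    using fillingsV_list_as_fillL[of us E T] by auto
  have "RBag (mset cs) \<in> bags E" "rigidS (RBag (mset cs)) (GList gs)"
    using cs by (auto simp: RBag_mset_in_bags)
  moreover have "\<forall>i. length (vs i) = degS i (RBag (mset cs)) \<and> set (vs i) \<subseteq> T i"
    using vs by (simp add: sum_mset_image_mset_mset)
  ultimately show "u \<in> fillingsS (bags E) T"
    using cs(3) fillingsS_memI by metis
qed

lemma bags_singleton: "bags {a} = {RBag (replicate_mset n a) | n. True}"
proof -
  have "set us \<subseteq> {a} \<longleftrightarrow> us = replicate (length us) a" for us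
    by (induction us) auto
  then show ?thesis
    unfolding bags_def by (metis length_replicate mset_replicate)
qed

lemma bags_image: "bags (f ` A) = {RBag (mset (map f ss)) | ss. set ss \<subseteq> A}"
proof -
  have "{RBag (mset us) | us. us \<in> lists (f ` A)} = {RBag (mset (map f ss)) | ss. ss \<in> lists A}"
    unfolding lists_image by blast
  then show ?thesis
    unfolding bags_def lists_eq_set by simp
qed

lemma taylor_Var_bags: "taylor (Var x) = bags {RVar x}"
  and taylor_Hole_bags: "taylor (Hole i) = bags {RHole i}"
  and taylor_Lam_bags: "taylor (Lam x M) = bags (RLam x ` taylor M)"
  by (simp_all add: bags_singleton bags_image)

fun taylor_val :: "lterm \<Rightarrow> rval set" where
  "taylor_val (Var x) = {RVar x}"
| "taylor_val (Lam x M) = RLam x ` taylor M"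
| "taylor_val _ = {}"

lemma taylor_value: "is_value V \<Longrightarrow> taylor V = bags (taylor_val V)"
  by (cases V) (simp_all del: taylor.simps add: taylor_Var_bags taylor_Lam_bags)

lemma taylor_fill_ctx:
  assumes "holes C \<subseteq> I" and "\<forall>i\<in>I. is_value (V i)"
  shows "taylor (fill_ctx C V) = fillingsS (taylor C) (\<lambda>i. taylor_val (V i))"
  using assms(1)
proof (induction C)
  case (Var x)
  show ?case by (simp del: taylor.simps add: taylor_Var_bags fillingsS_bags fillingsV_RVar)
next
  case (Hole j)
  with assms(2) show ?case
    by (simp del: taylor.simps add: taylor_value taylor_Hole_bags fillingsS_bags fillingsV_RHole)
next
  case (Lam x M)
  then show ?case
    by (simp del: taylor.simps add: taylor_Lam_bags fillingsS_bags fillingsV_RLam)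
next
  case (App M N)
  then show ?case by (simp add: fillingsS_RApp)
qed

lemma degS_taylor_not_hole: "c \<in> taylor C \<Longrightarrow> i \<notin> holes C \<Longrightarrow> degS i c = 0"
proof (induction C arbitrary: c)
  case (Lam x M)
  then obtain ss where "c = RBag (mset (map (RLam x) ss))" "set ss \<subseteq> taylor M" by auto
  with Lam show ?case by (auto simp: sum_mset_image_mset_mset sum_list_eq_0_iff)
qed auto

lemma fillingsS_taylor_holes:
  assumes "holes C \<subseteq> I"
  shows "fillingsS (taylor C) T = {fillS g vs | c g vs. c \<in> taylor C \<and> rigidS c g \<and>
     (\<forall>i\<in>I. length (vs i) = degS i c \<and> set (vs i) \<subseteq> T i)}"
proof (intro set_eqI iffI)
  fix u assume "u \<in> fillingsS (taylor C) T"
  then show "u \<in> {fillS g vs | c g vs. c \<in> taylor C \<and> rigidS c g \<and>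
     (\<forall>i\<in>I. length (vs i) = degS i c \<and> set (vs i) \<subseteq> T i)}"
    by (elim fillingsS_memE) blast
next
  fix u assume "u \<in> {fillS g vs | c g vs. c \<in> taylor C \<and> rigidS c g \<and>
     (\<forall>i\<in>I. length (vs i) = degS i c \<and> set (vs i) \<subseteq> T i)}"
  then obtain c g vs where u: "u = fillS g vs" and c: "c \<in> taylor C" "rigidS c g"
    and vs: "\<forall>i\<in>I. length (vs i) = degS i c \<and> set (vs i) \<subseteq> T i"
    by blast
  define vs' where "vs' i = (if i \<in> I then vs i else [])" for i
  have deg: "i \<notin> I \<Longrightarrow> gdegS i g = 0" for i
    using assms c by (auto simp: gdegS_rigidS intro: degS_taylor_not_hole)
  then have "fillS g vs = fillS g vs'"
    by (intro fillS_cong) (auto simp: vs'_def)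
  moreover have "\<forall>i. length (vs' i) = degS i c \<and> set (vs' i) \<subseteq> T i"
    using vs deg c(2) by (simp add: vs'_def gdegS_rigidS)
  ultimately show "u \<in> fillingsS (taylor C) T"
    using u c fillingsS_memI by metis
qed

theorem mainTheorem2:
  fixes k :: nat and C :: lterm and V :: "nat \<Rightarrow> lterm"
  assumes "holes C \<subseteq> {1..k}"
    and "\<forall>i\<in>{1..k}. is_value (V i) \<and> holes (V i) = {}"
  shows "taylor (fill_ctx C V) =
    {fillS g vs | c g vs. c \<in> taylor C \<and> rigidS c g \<and>
       (\<forall>i\<in>{1..k}. length (vs i) = degS i c \<and> RBag (mset (vs i)) \<in> taylor (V i))}"
proof -
  have is_val: "\<forall>i\<in>{1..k}. is_value (V i)"
    using assms(2) by blast
  then have bag_iff: "RBag (mset us) \<in> taylor (V i) \<longleftrightarrow> set us \<subseteq> taylor_val (V i)"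
    if "i \<in> {1..k}" for i us
    using that by (simp add: taylor_value RBag_mset_in_bags)
  have "taylor (fill_ctx C V) = fillingsS (taylor C) (\<lambda>i. taylor_val (V i))"
    using assms(1) is_val by (rule taylor_fill_ctx)
  also have "\<dots> = {fillS g vs | c g vs. c \<in> taylor C \<and> rigidS c g \<and>
      (\<forall>i\<in>{1..k}. length (vs i) = degS i c \<and> set (vs i) \<subseteq> taylor_val (V i))}"
    using assms(1) by (rule fillingsS_taylor_holes)
  finally show ?thesis
    by (simp add: bag_iff)
qed

end
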